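(* Let $\alpha_1,\ldots,\alpha_N,\beta_1,\ldots,\beta_N>0$ and let $\langle A\rangle$ be the $N\times N$ matrix with entries $\langle A_{ij}\rangle=\dfrac{\alpha_i\beta_j}{1+\alpha_i\beta_j}$. (1) If $0<\alpha_i\beta_j<1$ for all $i,j\in\{1,\ldots,N\}$, then $\langle A\rangle=\sum_{k=1}^\infty L_k$ (a convergent series), where each $L_k$ is a rank-one $N\times N$ matrix whose only nonzero singular value is \[\ell_k=\sqrt{\sum_{i,j=1}^N(\alpha_i\beta_j)^{2k}}.\] (2) If $\alpha_i\beta_j>1$ for all $i,j\in\{1,\ldots,N\}$, then $\langle A\rangle=N\,\hat{\bm 1}\hat{\bm 1}^\top+\sum_{k=1}^\infty M_k$ (a convergent series), where $\hat{\bm 1}=(1,\ldots,1)^\top/\sqrt N$ and each $M_k$ is a rank-one $N\times N$ matrix whose only nonzero singular value is \[m_k=\sqrt{\sum_{i,j=1}^N(\alpha_i\beta_j)^{-2k}}.\]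
   Context: $\langle A\rangle$ is the expected adjacency matrix of the directed soft configuration model; no further structure is needed beyond the displayed entry formula. *)

theory Defs
  imports "HOL-Analysis.Analysis"
begin

definition expA :: "('n::finite \<Rightarrow> real) \<Rightarrow> ('n \<Rightarrow> real) \<Rightarrow> real^'n^'n" where
  "expA \<alpha> \<beta> = (\<chi> i j. \<alpha> i * \<beta> j / (1 + \<alpha> i * \<beta> j))"

definition singular_value :: "real^'n::finite^'m::finite \<Rightarrow> real \<Rightarrow> bool" where
  "singular_value A \<sigma> \<longleftrightarrow> \<sigma> \<ge> 0 \<and>
     (\<exists>v. v \<noteq> 0 \<and> (transpose A ** A) *v v = (\<sigma>^2) *\<^sub>R v)"

definition onehat :: "real^'n::finite" where
  "onehat = (\<chi> i. 1 / sqrt (real CARD('n)))"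

definition outer :: "real^'n::finite \<Rightarrow> real^'m::finite \<Rightarrow> real^'m^'n" where
  "outer u v = (\<chi> i j. u $ i * v $ j)"

end

theory Submission
  imports Defs
begin

text \<open>Entrywise, \<open>x/(1+x)\<close> is a geometric series in \<open>x = \<alpha>\<^sub>i\<beta>\<^sub>j\<close> when \<open>x < 1\<close>,
  and \<open>1\<close> plus a geometric series in \<open>1/x\<close> when \<open>x > 1\<close>. Since \<open>(\<alpha>\<^sub>i\<beta>\<^sub>j)\<^sup>k = \<alpha>\<^sub>i\<^sup>k \<beta>\<^sub>j\<^sup>k\<close>,
  the \<open>k\<close>-th term of either series is, up to sign, the outer product of the entrywise
  \<open>k\<close>-th powers of \<open>\<alpha>\<close> and \<open>\<beta>\<close> (resp. of their inverses). An outer product \<open>u v\<^sup>T\<close> of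
  nonzero vectors has rank one and the single nonzero singular value \<open>\<parallel>u\<parallel> \<parallel>v\<parallel>\<close>,
  which for entrywise powers is the stated square root.\<close>

lemma sums_vecI:
  fixes f :: "nat \<Rightarrow> 'a::real_normed_vector^'n::finite"
  assumes "\<And>i. (\<lambda>k. f k $ i) sums (l $ i)"
  shows "f sums l"
  using assms unfolding sums_def
  by (intro vec_tendstoI) (simp add: sum_component)

lemma transpose_outer_mult_outer_vector:
  fixes u v w :: "real^'n::finite"
  shows "(transpose (outer u v) ** outer u v) *v w = ((u \<bullet> u) * (v \<bullet> w)) *\<^sub>R v"
  by (simp add: vec_eq_iff matrix_matrix_mult_def matrix_vector_mult_def transpose_def outer_def
      inner_vec_def sum_distrib_left sum_distrib_right mult_ac)

lemma outer_eq_0_iff: "outer u v = 0 \<longleftrightarrow> u = 0 \<or> v = 0"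
  by (auto simp: outer_def vec_eq_iff)

lemma rank_outer:
  fixes u v :: "real^'n::finite"
  assumes "u \<noteq> 0" "v \<noteq> 0"
  shows "rank (outer u v) = 1"
proof -
  have "rows (outer u v) \<subseteq> span {v}"
    by (auto simp: rows_def row_def outer_def span_singleton vec_eq_iff)
  then have "rank (outer u v) \<le> 1"
    unfolding row_rank_def by (metis dim_subset dim_span dim_singleton assms(2))
  moreover have "rank (outer u v) \<noteq> 0"
    using assms by (simp add: rank_eq_0 outer_eq_0_iff)
  ultimately show ?thesis by linarith
qed

lemma singular_values_outer:
  fixes u v :: "real^'n::finite"
  assumes "u \<noteq> 0" "v \<noteq> 0"
  shows "{s. singular_value (outer u v) s \<and> s \<noteq> 0} = {norm u * norm v}"
proof (intro set_eqI iffI)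
  fix s assume "s \<in> {s. singular_value (outer u v) s \<and> s \<noteq> 0}"
  then obtain w where s: "s \<ge> 0" "s \<noteq> 0" "w \<noteq> 0"
     and eigen: "((u \<bullet> u) * (v \<bullet> w)) *\<^sub>R v = s^2 *\<^sub>R w"
    by (auto simp: singular_value_def transpose_outer_mult_outer_vector)
  have "v \<bullet> w \<noteq> 0"
  proof
    assume "v \<bullet> w = 0"
    then have "s^2 *\<^sub>R w = 0" using eigen by simp
    then show False using s by simp
  qed
  moreover have "(u \<bullet> u) * (v \<bullet> v) * (v \<bullet> w) = s^2 * (v \<bullet> w)"
    using arg_cong[OF eigen, of "inner v"] by (simp add: mult_ac)
  ultimately have "(norm u * norm v)^2 = s^2"
    by (simp add: power_mult_distrib power2_norm_eq_inner)
  then show "s \<in> {norm u * norm v}"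
    using s by (simp add: power2_eq_iff_nonneg)
next
  fix s assume "s \<in> {norm u * norm v}"
  then have s: "s = norm u * norm v" by simp
  have "(transpose (outer u v) ** outer u v) *v v = s^2 *\<^sub>R v"
    by (simp add: transpose_outer_mult_outer_vector s power_mult_distrib power2_norm_eq_inner mult_ac)
  then show "s \<in> {s. singular_value (outer u v) s \<and> s \<noteq> 0}"
    using assms by (auto simp: singular_value_def s)
qed

lemma norm_power_vec:
  fixes a :: "'n::finite \<Rightarrow> real"
  shows "norm (\<chi> i. a i ^ k) = sqrt (\<Sum>i\<in>UNIV. a i ^ (2*k))"
  by (simp add: norm_vec_def L2_set_def flip: power_mult) (simp only: mult.commute)

lemma power_vec_nonzero:
  fixes a :: "'n::finite \<Rightarrow> real"
  assumes "\<And>i. a i \<noteq> 0"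
  shows "(\<chi> i. a i ^ k) \<noteq> 0"
  using assms by (auto simp: vec_eq_iff)

lemma rank_outer_power_vec:
  fixes a b :: "'n::finite \<Rightarrow> real"
  assumes "c \<noteq> 0" "\<And>i. a i \<noteq> 0" "\<And>j. b j \<noteq> 0"
  shows "rank (outer (c *\<^sub>R (\<chi> i. a i ^ k)) (\<chi> j. b j ^ k)) = 1"
  using assms by (intro rank_outer) (auto simp: power_vec_nonzero)

lemma singular_values_outer_power_vec:
  fixes a b :: "'n::finite \<Rightarrow> real"
  assumes "c \<noteq> 0" "\<And>i. a i \<noteq> 0" "\<And>j. b j \<noteq> 0"
  shows "{s. singular_value (outer (c *\<^sub>R (\<chi> i. a i ^ k)) (\<chi> j. b j ^ k)) s \<and> s \<noteq> 0} =
           {\<bar>c\<bar> * sqrt (\<Sum>i\<in>UNIV. \<Sum>j\<in>UNIV. (a i * b j) ^ (2*k))}"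
  using assms
  by (simp add: singular_values_outer power_vec_nonzero norm_power_vec sum_product
        power_mult_distrib flip: real_sqrt_mult)

lemma geometric_sums_lt_1:
  fixes x :: real
  assumes "\<bar>x\<bar> < 1"
  shows "(\<lambda>k. - ((- x) ^ Suc k)) sums (x / (1 + x))"
proof -
  have "norm (- x) < 1" using assms by simp
  from sums_mult[OF geometric_sums[OF this], of x] show ?thesis
    by (simp add: divide_simps)
qed

lemma geometric_sums_gt_1:
  fixes x :: real
  assumes "x > 1"
  shows "(\<lambda>k. (- inverse x) ^ Suc k) sums (x / (1 + x) - 1)"
proof -
  have "\<bar>inverse x\<bar> < 1" using assms by (simp add: inverse_less_1_iff)
  from sums_minus[OF geometric_sums_lt_1[OF this]] show ?thesis
    using assms by (simp add: field_simps)
qed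

lemma card_scaleR_outer_onehat: "real CARD('n::finite) *\<^sub>R outer onehat onehat = (\<chi> i j. 1 :: real^'n^'n)"
  by (simp add: vec_eq_iff outer_def onehat_def)

lemma power_int_minus_double: "(x::real) powi (- 2 * int k) = inverse x ^ (2*k)"
proof -
  have "- 2 * int k = - int (2*k)" by simp
  then show ?thesis by (simp only: power_int_minus power_int_of_nat) (simp add: power_inverse)
qed

lemma expA_series_lt_1:
  fixes \<alpha> \<beta> :: "'n::finite \<Rightarrow> real"
  assumes "\<And>i. \<alpha> i > 0" "\<And>j. \<beta> j > 0" "\<And>i j. \<alpha> i * \<beta> j < 1"
  shows "\<exists>L :: nat \<Rightarrow> real^'n^'n.
           (\<forall>k\<ge>1. rank (L k) = 1 \<and>
              {s. singular_value (L k) s \<and> s \<noteq> 0} =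
              {sqrt (\<Sum>i\<in>UNIV. \<Sum>j\<in>UNIV. (\<alpha> i * \<beta> j) ^ (2*k))}) \<and>
           (\<lambda>k. L (Suc k)) sums expA \<alpha> \<beta>"
proof (intro exI conjI allI impI)
  define L :: "nat \<Rightarrow> real^'n^'n" where
    "L k = outer ((- ((- 1) ^ k)) *\<^sub>R (\<chi> i. \<alpha> i ^ k)) (\<chi> j. \<beta> j ^ k)" for k
  have nonzero: "\<alpha> i \<noteq> 0" "\<beta> i \<noteq> 0" for i
    using assms(1,2)[of i] by auto
  fix k :: nat
  show "rank (L k) = 1"
    unfolding L_def by (rule rank_outer_power_vec) (simp_all add: nonzero)
  show "{s. singular_value (L k) s \<and> s \<noteq> 0} = {sqrt (\<Sum>i\<in>UNIV. \<Sum>j\<in>UNIV. (\<alpha> i * \<beta> j) ^ (2*k))}"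
    unfolding L_def by (subst singular_values_outer_power_vec) (simp_all add: nonzero)
  show "(\<lambda>k. L (Suc k)) sums expA \<alpha> \<beta>"
  proof (intro sums_vecI)
    fix i j
    have "\<bar>\<alpha> i * \<beta> j\<bar> < 1"
      using assms(1,2)[of i] assms(1,2)[of j] assms(3)[of i j] by simp
    from geometric_sums_lt_1[OF this] show "(\<lambda>k. L (Suc k) $ i $ j) sums (expA \<alpha> \<beta> $ i $ j)"
      by (simp add: L_def outer_def expA_def power_minus[of "\<alpha> i * \<beta> j"] power_mult_distrib mult_ac)
  qed
qed

lemma expA_series_gt_1:
  fixes \<alpha> \<beta> :: "'n::finite \<Rightarrow> real"
  assumes "\<And>i. \<alpha> i > 0" "\<And>j. \<beta> j > 0" "\<And>i j. \<alpha> i * \<beta> j > 1"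
  shows "\<exists>M :: nat \<Rightarrow> real^'n^'n.
           (\<forall>k\<ge>1. rank (M k) = 1 \<and>
              {s. singular_value (M k) s \<and> s \<noteq> 0} =
              {sqrt (\<Sum>i\<in>UNIV. \<Sum>j\<in>UNIV. (\<alpha> i * \<beta> j) powi (- 2 * int k))}) \<and>
           (\<lambda>k. M (Suc k)) sums (expA \<alpha> \<beta> - real CARD('n) *\<^sub>R outer onehat onehat)"
proof (intro exI conjI allI impI)
  define M :: "nat \<Rightarrow> real^'n^'n" where
    "M k = outer ((- 1) ^ k *\<^sub>R (\<chi> i. inverse (\<alpha> i) ^ k)) (\<chi> j. inverse (\<beta> j) ^ k)" for k
  have nonzero: "\<alpha> i \<noteq> 0" "\<beta> i \<noteq> 0" for i
    using assms(1,2)[of i] by auto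
  fix k :: nat
  show "rank (M k) = 1"
    unfolding M_def by (rule rank_outer_power_vec) (simp_all add: nonzero)
  show "{s. singular_value (M k) s \<and> s \<noteq> 0} =
          {sqrt (\<Sum>i\<in>UNIV. \<Sum>j\<in>UNIV. (\<alpha> i * \<beta> j) powi (- 2 * int k))}"
    unfolding M_def power_int_minus_double
    by (subst singular_values_outer_power_vec) (simp_all add: nonzero inverse_mult_distrib)
  show "(\<lambda>k. M (Suc k)) sums (expA \<alpha> \<beta> - real CARD('n) *\<^sub>R outer onehat onehat)"
  proof (intro sums_vecI)
    fix i j
    from geometric_sums_gt_1[OF assms(3)[of i j]]
    show "(\<lambda>k. M (Suc k) $ i $ j) sums ((expA \<alpha> \<beta> - real CARD('n) *\<^sub>R outer onehat onehat) $ i $ j)"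
      unfolding card_scaleR_outer_onehat
      by (simp add: M_def outer_def expA_def power_minus[of "inverse (\<alpha> i) * inverse (\<beta> j)"]
            power_mult_distrib inverse_mult_distrib mult_ac)
  qed
qed

theorem lemmaS30:
  fixes \<alpha> \<beta> :: "'n::finite \<Rightarrow> real"
  assumes "\<And>i. \<alpha> i > 0" and "\<And>j. \<beta> j > 0"
  shows "((\<forall>i j. 0 < \<alpha> i * \<beta> j \<and> \<alpha> i * \<beta> j < 1) \<longrightarrow>
           (\<exists>L :: nat \<Rightarrow> real^'n^'n.
              (\<forall>k\<ge>1. rank (L k) = 1 \<and>
                 {s. singular_value (L k) s \<and> s \<noteq> 0} =
                 {sqrt (\<Sum>i\<in>UNIV. \<Sum>j\<in>UNIV. (\<alpha> i * \<beta> j) ^ (2*k))}) \<and>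
              (\<lambda>k. L (Suc k)) sums expA \<alpha> \<beta>))
       \<and> ((\<forall>i j. \<alpha> i * \<beta> j > 1) \<longrightarrow>
           (\<exists>M :: nat \<Rightarrow> real^'n^'n.
              (\<forall>k\<ge>1. rank (M k) = 1 \<and>
                 {s. singular_value (M k) s \<and> s \<noteq> 0} =
                 {sqrt (\<Sum>i\<in>UNIV. \<Sum>j\<in>UNIV. (\<alpha> i * \<beta> j) powi (- 2 * int k))}) \<and>
              (\<lambda>k. M (Suc k)) sums
                 (expA \<alpha> \<beta> - real CARD('n) *\<^sub>R outer onehat onehat)))"
  using expA_series_lt_1[of \<alpha> \<beta>] expA_series_gt_1[of \<alpha> \<beta>] assms by blast

end
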